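(* Let $A\in\mathbb{R}^{n\times n}$, $B\in\mathbb{R}^{n\times m}$, $\bar T>0$, let $\tilde B\in\mathbb{C}^{r\times m}$ be fixed and let $D=\operatorname{diag}(\lambda_1,\ldots,\lambda_r)$, with $\lambda_i+\lambda_j\neq 0$ for all $i,j$ and $\lambda_i\notin\Lambda(-A)$ for all $i$. Let $\tilde P_{\bar T}=\tilde P_{\bar T}(\lambda_1,\dots,\lambda_r)$ and $\tilde P_{2,\bar T}=\tilde P_{2,\bar T}(\lambda_1,\dots,\lambda_r)$ be the solutions of $$A \tilde P_{2, {\bar T}}+ \tilde P_{2, {\bar T}} D =-B \tilde B^T+e^{A \bar T}B \tilde B^T e^{D \bar T},\qquad D\tilde P_{\bar T}+\tilde P_{\bar T} D =-\tilde B \tilde B^T+e^{D \bar T}\tilde B \tilde B^T e^{D \bar T}.$$ Then for each $i\in\{1,\dots,r\}$ the partial derivatives $X^{(i)}:=\partial_{\lambda_i} \tilde P_{\bar T}$ and $X_2^{(i)}:=\partial_{\lambda_i} \tilde P_{2, \bar T}$ solve $$DX^{(i)}+X^{(i)} D =-e_ie_i^T\tilde P_{\bar T}-\tilde P_{\bar T}e_ie_i^T+\bar T e_ie_i^Te^{D \bar T}\tilde B \tilde B^T e^{D \bar T}+\bar Te^{D \bar T}\tilde B \tilde B^T e^{D \bar T}e_ie_i^T,$$ $$A X_2^{(i)}+ X_2^{(i)} D =-\tilde P_{2, {\bar T}} e_ie_i^T+\bar T e^{A \bar T}B \tilde B^T e^{D \bar T}e_ie_i^T,$$ respectively.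
   Context: $e_i$ denotes the $i$-th column of the identity matrix of appropriate size. $\Lambda(A)$ is the spectrum of $A$. In the paper's setting $D$ arises from a diagonalization $\hat A=S^{-1}DS$ of a reduced matrix $\hat A$ and $\tilde B=S\hat B$; the derivatives are taken with respect to the eigenvalues $\lambda_i$ with $\tilde B$ held fixed. *)

theory Defs
  imports "HOL-Analysis.Analysis"
begin

(* Matrices are represented as elements of 'a^'cols^'rows (HOL-Analysis),
   with matrix product (**). *)

primrec mat_pow :: "('a::semiring_1)^'n^'n \<Rightarrow> nat \<Rightarrow> 'a^'n^'n" where
  "mat_pow M 0 = mat 1"
| "mat_pow M (Suc k) = M ** mat_pow M k"

definition mexp :: "complex^'n^'n \<Rightarrow> complex^'n^'n" where
  "mexp M = (\<Sum>k. (1 / fact k :: real) *\<^sub>R mat_pow M k)"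

definition cspectrum :: "complex^'n^'n \<Rightarrow> complex set" where
  "cspectrum M = {z. \<exists>v. v \<noteq> 0 \<and> M *v v = z *s v}"

definition cmat :: "real^'m^'n \<Rightarrow> complex^'m^'n" where
  "cmat M = (\<chi> i j. complex_of_real (M $ i $ j))"

definition diagm :: "complex^'r \<Rightarrow> complex^'r^'r" where
  "diagm lam = (\<chi> i j. if i = j then lam $ i else 0)"

definition eemat :: "'r \<Rightarrow> complex^'r^'r" where
  "eemat i = (\<chi> j k. if j = i \<and> k = i then 1 else 0)"

definition admissible :: "real^'n^'n \<Rightarrow> complex^'r \<Rightarrow> bool" where
  "admissible A lam \<longleftrightarrow>
     (\<forall>i j. lam $ i + lam $ j \<noteq> 0) \<and> (\<forall>i. lam $ i \<notin> cspectrum (- cmat A))"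

end

theory Submission
  imports Defs
begin

text \<open>Along the line \<open>t \<mapsto> \<lambda> + t e\<^sub>i\<close> both equations are Sylvester equations
  \<open>N X + X D = R\<close> with coefficients depending holomorphically on \<open>t\<close>. Column \<open>c\<close> of such an
  equation is the linear system \<open>(N + \<lambda>\<^sub>c I) x = r\<close>, which stays nonsingular near \<open>t = 0\<close> by
  admissibility, so Cramer's rule shows that the solutions are differentiable. Differentiating the
  equations by the product rule, with \<open>\<partial> D = e\<^sub>i e\<^sub>i\<^sup>T\<close> and \<open>\<partial> e\<^bsup>TD\<^esup> = T e\<^bsup>TD\<^esup> e\<^sub>i e\<^sub>i\<^sup>T\<close>, then yields
  the claimed equations.\<close>

lemma matrix_mult_diagm_left: "(diagm u ** M) $ a $ c = u $ a * M $ a $ c"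
  by (simp add: matrix_matrix_mult_def diagm_def if_distrib if_distribR cong: if_cong)

lemma matrix_mult_diagm_right: "(M ** diagm u) $ a $ c = M $ a $ c * u $ c"
  by (simp add: matrix_matrix_mult_def diagm_def if_distrib if_distribR cong: if_cong)

lemma diagm_mult_diagm: "diagm u ** diagm v = diagm (\<chi> j. u $ j * v $ j)"
  by (simp add: vec_eq_iff matrix_mult_diagm_left) (simp add: diagm_def)

lemma diagm_mult_commute: "diagm u ** diagm v = diagm v ** diagm u"
  by (simp add: diagm_mult_diagm mult.commute)

lemma scaleR_diagm: "c *\<^sub>R diagm v = diagm (c *\<^sub>R v)"
  by (simp add: vec_eq_iff diagm_def)

lemma axis_zero [simp]: "axis i 0 = 0"
  by (simp add: vec_eq_iff axis_def)

lemma eemat_eq_diagm_axis: "eemat i = diagm (axis i 1)"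
  by (simp add: vec_eq_iff eemat_def diagm_def axis_def)

lemma mat_pow_diagm: "mat_pow (diagm v) k = diagm (\<chi> j. v $ j ^ k)"
proof (induction k)
  case 0
  show ?case by (simp add: vec_eq_iff diagm_def mat_def)
next
  case (Suc k)
  then show ?case by (simp add: diagm_mult_diagm)
qed

lemma mexp_diagm: "mexp (diagm v) = diagm (\<chi> j. exp (v $ j))"
proof -
  have "(\<lambda>n. \<Sum>k<n. (1 / fact k :: real) *\<^sub>R mat_pow (diagm v) k)
      = (\<lambda>n. \<chi> a b. if a = b then \<Sum>k<n. v $ a ^ k /\<^sub>R fact k else 0)"
    unfolding mat_pow_diagm
    by (auto simp: vec_eq_iff sum_component diagm_def divide_inverse_commute intro!: sum.cong)
  also have "\<dots> \<longlonglongrightarrow> diagm (\<chi> j. exp (v $ j))"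
    unfolding diagm_def by (intro tendsto_vec_lambda) (auto simp: exp_converges[unfolded sums_def])
  finally show ?thesis
    unfolding mexp_def sums_def[symmetric] by (rule sums_unique[symmetric])
qed

lemma matrix_vector_mult_mat: "mat s *v v = s *s v"
  by (simp add: vec_eq_iff matrix_vector_mult_def mat_def if_distrib[where f = "\<lambda>a. a * _"]
      cong: if_cong)

lemma notin_cspectrum_uminus_iff: "s \<notin> cspectrum (- M) \<longleftrightarrow> det (M + mat s) \<noteq> 0"
proof -
  have "(- M) *v v = - (M *v v)" for v
    by (simp add: vec_eq_iff matrix_vector_mult_def sum_negf)
  then have "(M + mat s) *v v = 0 \<longleftrightarrow> (- M) *v v = s *s v" for v
    by (simp add: matrix_vector_mult_add_rdistrib matrix_vector_mult_mat add_eq_0_iff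
        eq_commute[of "s *s v"])
  then show ?thesis
    unfolding invertible_det_nz[symmetric] invertible_left_inverse matrix_left_invertible_ker
      cspectrum_def by auto
qed

lemma sylvester_column:
  "column c (N ** Q + Q ** diagm m) = (N + mat (m $ c)) *v column c Q"
  by (simp add: vec_eq_iff column_def matrix_vector_mult_add_rdistrib matrix_vector_mult_mat
      matrix_mult_diagm_right)
    (simp add: matrix_vector_mult_def matrix_matrix_mult_def mult.commute)

definition has_entrywise_derivative ::
    "(complex \<Rightarrow> complex^'m^'n) \<Rightarrow> complex^'m^'n \<Rightarrow> complex \<Rightarrow> bool" where
  "has_entrywise_derivative F F' z \<longleftrightarrow>
     (\<forall>j k. ((\<lambda>t. F t $ j $ k) has_field_derivative F' $ j $ k) (at z))"

lemma has_entrywise_derivative_imp_field_differentiable: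
  "has_entrywise_derivative F F' z \<Longrightarrow> (\<lambda>t. F t $ j $ k) field_differentiable (at z)"
  unfolding has_entrywise_derivative_def field_differentiable_def by blast

lemma has_entrywise_derivative_const: "has_entrywise_derivative (\<lambda>t. C) 0 z"
  by (simp add: has_entrywise_derivative_def)

lemma has_entrywise_derivative_add:
  "has_entrywise_derivative F F' z \<Longrightarrow> has_entrywise_derivative G G' z \<Longrightarrow>
    has_entrywise_derivative (\<lambda>t. F t + G t) (F' + G') z"
  by (simp add: has_entrywise_derivative_def DERIV_add)

lemma has_entrywise_derivative_mult:
  assumes "has_entrywise_derivative F F' z" "has_entrywise_derivative G G' z"
  shows "has_entrywise_derivative (\<lambda>t. F t ** G t) (F' ** G z + F z ** G') z"
  using assms unfolding has_entrywise_derivative_def matrix_matrix_mult_def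
  by (auto simp: sum.distrib ac_simps intro!: DERIV_sum derivative_eq_intros)

lemma has_entrywise_derivative_mult_const_left:
  "has_entrywise_derivative F F' z \<Longrightarrow> has_entrywise_derivative (\<lambda>t. C ** F t) (C ** F') z"
  using has_entrywise_derivative_mult[OF has_entrywise_derivative_const] by fastforce

lemma has_entrywise_derivative_mult_const_right:
  "has_entrywise_derivative F F' z \<Longrightarrow> has_entrywise_derivative (\<lambda>t. F t ** C) (F' ** C) z"
  using has_entrywise_derivative_mult[OF _ has_entrywise_derivative_const] by fastforce

lemma has_entrywise_derivative_diagm:
  "(\<And>j. ((\<lambda>t. v t $ j) has_field_derivative v' $ j) (at z)) \<Longrightarrow>
    has_entrywise_derivative (\<lambda>t. diagm (v t)) (diagm v') z"
  by (simp add: has_entrywise_derivative_def diagm_def)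

lemma has_entrywise_derivative_unique_eventually:
  assumes "eventually (\<lambda>t. F t = G t) (nhds z)"
    and "has_entrywise_derivative F F' z" "has_entrywise_derivative G G' z"
  shows "F' = G'"
proof -
  have "((\<lambda>t. G t $ j $ k) has_field_derivative F' $ j $ k) (at z)" for j k
  proof -
    have "eventually (\<lambda>t. F t $ j $ k = G t $ j $ k) (nhds z)"
      using assms(1) by eventually_elim simp
    from DERIV_cong_ev[OF refl this refl] show ?thesis
      using assms(2) unfolding has_entrywise_derivative_def by blast
  qed
  then show ?thesis
    using assms(3) DERIV_unique unfolding has_entrywise_derivative_def vec_eq_iff by blast
qed

lemma field_differentiable_eventually_nonzero:
  "f field_differentiable (at z) \<Longrightarrow> f z \<noteq> 0 \<Longrightarrow> eventually (\<lambda>t. f t \<noteq> 0) (nhds z)"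
  by (metis field_differentiable_imp_continuous_at isCont_def tendsto_at_iff_tendsto_nhds
      tendsto_imp_eventually_ne)

lemma field_differentiable_det:
  fixes F :: "complex \<Rightarrow> complex^'n^'n"
  assumes "\<And>j k. (\<lambda>t. F t $ j $ k) field_differentiable (at z)"
  shows "(\<lambda>t. det (F t)) field_differentiable (at z)"
proof -
  have "(\<lambda>t. \<Prod>j\<in>UNIV. F t $ j $ p j) field_differentiable (at z)" for p :: "'n \<Rightarrow> 'n"
  proof -
    have "((\<lambda>t. F t $ j $ p j) has_field_derivative deriv (\<lambda>t. F t $ j $ p j) z) (at z)" for j
      using assms by (rule field_differentiable_derivI)
    from has_field_derivative_prod[of UNIV "\<lambda>j t. F t $ j $ p j", OF this] show ?thesis
      unfolding field_differentiable_def by blast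
  qed
  then show ?thesis
    unfolding det_def by (intro field_differentiable_sum field_differentiable_mult field_differentiable_const)
qed

lemma linear_solution_field_differentiable:
  fixes M :: "complex \<Rightarrow> complex^'n^'n" and x b :: "complex \<Rightarrow> complex^'n"
  assumes M: "\<And>j k. (\<lambda>t. M t $ j $ k) field_differentiable (at z)"
    and b: "\<And>j. (\<lambda>t. b t $ j) field_differentiable (at z)"
    and nonsingular: "det (M z) \<noteq> 0"
    and sol: "eventually (\<lambda>t. M t *v x t = b t) (nhds z)"
  shows "(\<lambda>t. x t $ k) field_differentiable (at z)"
proof -
  define Mk where "Mk t = (\<chi> j l. if l = k then b t $ j else M t $ j $ l)" for t
  have det_M: "(\<lambda>t. det (M t)) field_differentiable (at z)"
    using M by (rule field_differentiable_det)
  have "(\<lambda>t. Mk t $ j $ l) field_differentiable (at z)" for j l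
    using M b by (cases "l = k") (simp_all add: Mk_def)
  then have "(\<lambda>t. det (Mk t)) field_differentiable (at z)"
    by (rule field_differentiable_det)
  then have "(\<lambda>t. det (Mk t) / det (M t)) field_differentiable (at z)"
    using det_M nonsingular by (intro field_differentiable_divide)
  moreover have "eventually (\<lambda>t. det (Mk t) / det (M t) = x t $ k) (nhds z)"
    using field_differentiable_eventually_nonzero[OF det_M nonsingular] sol
    by eventually_elim (simp add: cramer Mk_def)
  ultimately show ?thesis
    unfolding field_differentiable_def using DERIV_cong_ev[OF refl _ refl] by metis
qed

lemma sylvester_solution_has_entrywise_derivative:
  fixes N :: "complex \<Rightarrow> complex^'n^'n" and m :: "complex \<Rightarrow> complex^'r"
    and Q R :: "complex \<Rightarrow> complex^'r^'n"
  assumes N: "has_entrywise_derivative N N' z"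
    and m: "has_entrywise_derivative (\<lambda>t. diagm (m t)) M' z"
    and R: "has_entrywise_derivative R R' z"
    and nonsingular: "\<And>c. det (N z + mat (m z $ c)) \<noteq> 0"
    and sol: "eventually (\<lambda>t. N t ** Q t + Q t ** diagm (m t) = R t) (nhds z)"
  shows "\<exists>X. has_entrywise_derivative Q X z"
proof -
  have "(\<lambda>t. column c (Q t) $ l) field_differentiable (at z)" for l c
  proof (rule linear_solution_field_differentiable)
    have "(\<lambda>t. diagm (m t) $ c $ c) field_differentiable (at z)"
      using m by (rule has_entrywise_derivative_imp_field_differentiable)
    then show "(\<lambda>t. (N t + mat (m t $ c)) $ j $ k) field_differentiable (at z)" for j k
      using has_entrywise_derivative_imp_field_differentiable[OF N]
      by (cases "j = k") (simp_all add: mat_def diagm_def field_differentiable_add)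
    show "(\<lambda>t. column c (R t) $ j) field_differentiable (at z)" for j
      using has_entrywise_derivative_imp_field_differentiable[OF R] by (simp add: column_def)
    show "eventually (\<lambda>t. (N t + mat (m t $ c)) *v column c (Q t) = column c (R t)) (nhds z)"
      using sol by eventually_elim (simp flip: sylvester_column)
  qed (use nonsingular in simp)
  then have "((\<lambda>t. Q t $ l $ c) has_field_derivative deriv (\<lambda>t. Q t $ l $ c) z) (at z)" for l c
    by (simp add: column_def field_differentiable_derivI)
  then have "has_entrywise_derivative Q (\<chi> l c. deriv (\<lambda>t. Q t $ l $ c) z) z"
    by (simp add: has_entrywise_derivative_def)
  then show ?thesis ..
qed

lemma has_entrywise_derivative_diagm_axis:
  "has_entrywise_derivative (\<lambda>t. diagm (lam + axis i t)) (eemat i) z"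
  unfolding eemat_eq_diagm_axis
  by (rule has_entrywise_derivative_diagm) (auto simp: axis_def intro!: derivative_eq_intros)

lemma mexp_scaleR_diagm: "mexp (T *\<^sub>R diagm v) = diagm (\<chi> j. exp (T *\<^sub>R v $ j))"
  by (simp add: scaleR_diagm mexp_diagm)

lemma has_entrywise_derivative_mexp_diagm_axis:
  "has_entrywise_derivative (\<lambda>t. mexp (T *\<^sub>R diagm (lam + axis i t)))
     (T *\<^sub>R (mexp (T *\<^sub>R diagm lam) ** eemat i)) 0"
proof -
  have "((\<lambda>t. exp (T *\<^sub>R (lam + axis i t) $ j)) has_field_derivative
      exp (T *\<^sub>R lam $ j) * (T *\<^sub>R axis i 1 $ j)) (at 0)" for j
    by (cases "j = i") (auto simp: axis_def scaleR_conv_of_real intro!: derivative_eq_intros)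
  then have "has_entrywise_derivative (\<lambda>t. mexp (T *\<^sub>R diagm (lam + axis i t)))
      (diagm (\<chi> j. exp (T *\<^sub>R lam $ j) * (T *\<^sub>R axis i 1 $ j))) 0"
    unfolding mexp_scaleR_diagm by (intro has_entrywise_derivative_diagm) simp
  also have "diagm (\<chi> j. exp (T *\<^sub>R lam $ j) * (T *\<^sub>R axis i 1 $ j))
      = T *\<^sub>R (mexp (T *\<^sub>R diagm lam) ** eemat i)"
    unfolding mexp_scaleR_diagm
    unfolding eemat_eq_diagm_axis diagm_mult_diagm scaleR_diagm by (simp add: diagm_def vec_eq_iff)
  finally show ?thesis .
qed

lemma admissible_iff_det:
  "admissible A lam \<longleftrightarrow>
    (\<forall>j k. lam $ j + lam $ k \<noteq> 0) \<and> (\<forall>j. det (cmat A + mat (lam $ j)) \<noteq> 0)"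
  by (simp add: admissible_def notin_cspectrum_uminus_iff)

lemma eventually_admissible_axis:
  assumes "admissible A lam"
  shows "eventually (\<lambda>t. admissible A (lam + axis i t)) (nhds 0)"
proof -
  have axis: "(\<lambda>t. (lam + axis i t) $ j) field_differentiable (at 0)" for j
    by (cases "j = i") (simp_all add: axis_def field_differentiable_add
        field_differentiable_const field_differentiable_ident)
  have "eventually (\<lambda>t. (lam + axis i t) $ j + (lam + axis i t) $ k \<noteq> 0) (nhds 0)" for j k
    using assms axis
    by (intro field_differentiable_eventually_nonzero field_differentiable_add)
      (simp_all add: admissible_iff_det)
  moreover have "eventually (\<lambda>t. det (cmat A + mat ((lam + axis i t) $ j)) \<noteq> 0) (nhds 0)" for j
  proof (intro field_differentiable_eventually_nonzero field_differentiable_det)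
    show "(\<lambda>t. (cmat A + mat ((lam + axis i t) $ j)) $ a $ b) field_differentiable (at 0)" for a b
      using axis by (cases "a = b") (simp_all add: mat_def field_differentiable_add
          field_differentiable_const)
  qed (use assms in \<open>simp add: admissible_iff_det\<close>)
  ultimately show ?thesis
    unfolding admissible_iff_det by (auto intro!: eventually_conj eventually_all_finite)
qed

lemma has_entrywise_derivative_lyapunov_diagm_axis:
  fixes Q :: "complex \<Rightarrow> complex^'r^'r" and T :: real and lam :: "complex^'r" and i :: 'r
  defines "E \<equiv> \<lambda>t. mexp (T *\<^sub>R diagm (lam + axis i t))"
  assumes nonzero: "\<And>j k. lam $ j + lam $ k \<noteq> 0"
    and sol: "eventually (\<lambda>t. diagm (lam + axis i t) ** Q t + Q t ** diagm (lam + axis i t)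
      = H + E t ** G ** E t) (nhds 0)"
  shows "\<exists>X. has_entrywise_derivative Q X 0 \<and>
    diagm lam ** X + X ** diagm lam = - (eemat i ** Q 0) - Q 0 ** eemat i
      + T *\<^sub>R (eemat i ** E 0 ** G ** E 0) + T *\<^sub>R (E 0 ** G ** E 0 ** eemat i)"
proof -
  have dD: "has_entrywise_derivative (\<lambda>t. diagm (lam + axis i t)) (eemat i) 0"
    by (rule has_entrywise_derivative_diagm_axis)
  have dE: "has_entrywise_derivative E (T *\<^sub>R (E 0 ** eemat i)) 0"
    unfolding E_def using has_entrywise_derivative_mexp_diagm_axis[of T lam i] by simp
  have dR: "has_entrywise_derivative (\<lambda>t. H + E t ** G ** E t)
      (0 + ((T *\<^sub>R (E 0 ** eemat i)) ** G ** E 0 + E 0 ** G ** (T *\<^sub>R (E 0 ** eemat i)))) 0"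
    by (intro has_entrywise_derivative_add has_entrywise_derivative_const
        has_entrywise_derivative_mult has_entrywise_derivative_mult_const_right dE)
  have "det (diagm lam + mat (lam $ c)) \<noteq> 0" for c
    using nonzero by (subst det_diagonal) (auto simp: diagm_def mat_def)
  then obtain X where dQ: "has_entrywise_derivative Q X 0"
    using sylvester_solution_has_entrywise_derivative[OF dD dD dR _ sol] by auto
  have E0_eemat_commute: "E 0 ** eemat i = eemat i ** E 0"
    by (simp add: E_def mexp_scaleR_diagm eemat_eq_diagm_axis diagm_mult_commute)
  have "eemat i ** Q 0 + diagm lam ** X + (X ** diagm lam + Q 0 ** eemat i)
      = 0 + ((T *\<^sub>R (E 0 ** eemat i)) ** G ** E 0 + E 0 ** G ** (T *\<^sub>R (E 0 ** eemat i)))"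
    using has_entrywise_derivative_unique_eventually[OF sol
        has_entrywise_derivative_add[OF has_entrywise_derivative_mult[OF dD dQ]
          has_entrywise_derivative_mult[OF dQ dD]] dR]
    by simp
  also have "(T *\<^sub>R (E 0 ** eemat i)) ** G ** E 0 = T *\<^sub>R (eemat i ** E 0 ** G ** E 0)"
    by (simp add: E0_eemat_commute scalar_matrix_assoc[symmetric])
  also have "E 0 ** G ** (T *\<^sub>R (E 0 ** eemat i)) = T *\<^sub>R (E 0 ** G ** E 0 ** eemat i)"
    by (simp add: matrix_scalar_ac scalar_matrix_assoc[symmetric] matrix_mul_assoc)
  finally show ?thesis
    using dQ by (auto simp: algebra_simps)
qed

lemma has_entrywise_derivative_sylvester_diagm_axis:
  fixes Q :: "complex \<Rightarrow> complex^'r^'n" and T :: real and lam :: "complex^'r" and i :: 'r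
  defines "E \<equiv> \<lambda>t. mexp (T *\<^sub>R diagm (lam + axis i t))"
  assumes nonsingular: "\<And>c. det (N + mat (lam $ c)) \<noteq> 0"
    and sol: "eventually (\<lambda>t. N ** Q t + Q t ** diagm (lam + axis i t) = H + F ** E t) (nhds 0)"
  shows "\<exists>X. has_entrywise_derivative Q X 0 \<and>
    N ** X + X ** diagm lam = - (Q 0 ** eemat i) + T *\<^sub>R (F ** E 0 ** eemat i)"
proof -
  have dD: "has_entrywise_derivative (\<lambda>t. diagm (lam + axis i t)) (eemat i) 0"
    by (rule has_entrywise_derivative_diagm_axis)
  have dE: "has_entrywise_derivative E (T *\<^sub>R (E 0 ** eemat i)) 0"
    unfolding E_def using has_entrywise_derivative_mexp_diagm_axis[of T lam i] by simp
  have dR: "has_entrywise_derivative (\<lambda>t. H + F ** E t) (0 + F ** (T *\<^sub>R (E 0 ** eemat i))) 0"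
    by (intro has_entrywise_derivative_add has_entrywise_derivative_const
        has_entrywise_derivative_mult_const_left dE)
  obtain X where dQ: "has_entrywise_derivative Q X 0"
    using sylvester_solution_has_entrywise_derivative[OF has_entrywise_derivative_const dD dR _ sol]
      nonsingular by auto
  have "N ** X + (X ** diagm lam + Q 0 ** eemat i) = 0 + F ** (T *\<^sub>R (E 0 ** eemat i))"
    using has_entrywise_derivative_unique_eventually[OF sol
        has_entrywise_derivative_add[OF has_entrywise_derivative_mult_const_left[OF dQ]
          has_entrywise_derivative_mult[OF dQ dD]] dR]
    by simp
  then show ?thesis
    using dQ by (auto simp: matrix_scalar_ac scalar_matrix_assoc[symmetric] matrix_mul_assoc
        algebra_simps)
qed

theorem lemma3p1:
  fixes A :: "real^'n^'n" and B :: "real^'m^'n" and T :: real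
    and Bt :: "complex^'m^'r"
    and P :: "complex^'r \<Rightarrow> complex^'r^'r"
    and P2 :: "complex^'r \<Rightarrow> complex^'r^'n"
    and lam :: "complex^'r" and i :: 'r
  assumes T_pos: "T > 0"
    and P2_sol: "\<And>mu. admissible A mu \<Longrightarrow>
      cmat A ** P2 mu + P2 mu ** diagm mu =
        - (cmat B ** transpose Bt)
        + mexp (T *\<^sub>R cmat A) ** cmat B ** transpose Bt ** mexp (T *\<^sub>R diagm mu)"
    and P_sol: "\<And>mu. admissible A mu \<Longrightarrow>
      diagm mu ** P mu + P mu ** diagm mu =
        - (Bt ** transpose Bt)
        + mexp (T *\<^sub>R diagm mu) ** Bt ** transpose Bt ** mexp (T *\<^sub>R diagm mu)"
    and adm: "admissible A lam"
  shows "\<exists>X X2.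
     (\<forall>j k. ((\<lambda>t. P (lam + axis i t) $ j $ k) has_field_derivative X $ j $ k) (at 0)) \<and>
     (\<forall>j k. ((\<lambda>t. P2 (lam + axis i t) $ j $ k) has_field_derivative X2 $ j $ k) (at 0)) \<and>
     diagm lam ** X + X ** diagm lam =
        - (eemat i ** P lam) - P lam ** eemat i
        + T *\<^sub>R (eemat i ** mexp (T *\<^sub>R diagm lam) ** Bt ** transpose Bt ** mexp (T *\<^sub>R diagm lam))
        + T *\<^sub>R (mexp (T *\<^sub>R diagm lam) ** Bt ** transpose Bt ** mexp (T *\<^sub>R diagm lam) ** eemat i) \<and>
     cmat A ** X2 + X2 ** diagm lam =
        - (P2 lam ** eemat i)
        + T *\<^sub>R (mexp (T *\<^sub>R cmat A) ** cmat B ** transpose Bt ** mexp (T *\<^sub>R diagm lam) ** eemat i)"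
proof -
  have adm_near: "eventually (\<lambda>t. admissible A (lam + axis i t)) (nhds 0)"
    using adm by (rule eventually_admissible_axis)
  have solP: "eventually (\<lambda>t.
      diagm (lam + axis i t) ** P (lam + axis i t) + P (lam + axis i t) ** diagm (lam + axis i t)
      = - (Bt ** transpose Bt) + mexp (T *\<^sub>R diagm (lam + axis i t)) ** (Bt ** transpose Bt)
        ** mexp (T *\<^sub>R diagm (lam + axis i t))) (nhds 0)"
    using adm_near by eventually_elim (simp add: P_sol matrix_mul_assoc)
  have solP2: "eventually (\<lambda>t.
      cmat A ** P2 (lam + axis i t) + P2 (lam + axis i t) ** diagm (lam + axis i t)
      = - (cmat B ** transpose Bt) + (mexp (T *\<^sub>R cmat A) ** cmat B ** transpose Bt)
        ** mexp (T *\<^sub>R diagm (lam + axis i t))) (nhds 0)"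
    using adm_near by eventually_elim (simp add: P2_sol)
  from has_entrywise_derivative_lyapunov_diagm_axis[OF _ solP]
    has_entrywise_derivative_sylvester_diagm_axis[OF _ solP2]
  show ?thesis
    using adm unfolding has_entrywise_derivative_def by (auto simp: admissible_iff_det matrix_mul_assoc)
qed

end
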